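(* In any quiver, every normal vertex of finite height is phylogenetic.
   Context: A quiver consists of a class of vertices and, for each ordered pair of vertices $(A,B)$, a set of edges $A\to B$ (loops and multiple edges allowed). An evolution of length $m\ge 0$ is a sequence $A_0\leftarrow A_1\leftarrow\cdots\leftarrow A_m$ of vertices together with edges $A_k\to A_{k-1}$ ($1\le k\le m$); $A_0$ is its initial and $A_m$ its terminal vertex. Write $A\le B$ ($A$ is an ancestor of $B$) if there is an evolution with initial vertex $A$ and terminal vertex $B$; $A,B$ are isotypic ($A\sim B$) if $A\le B$ and $B\le A$. A vertex $A$ is primitive if every ancestor of $A$ is isotypic to $A$. A full evolution for $X$ is an evolution with primitive initial vertex and terminal vertex $X$. The height $h(X)$ is the smallest length of a full evolution for $X$ ($\infty$ if none). A vertex $A_k$ ($0\le k<m$) of an evolution $A_0\leftarrow\cdots\leftarrow A_m$ is critical if $h(A_k)<\infty$ and $h(A_{k+1})=h(A_k)+1$. The critical ancestors of a vertex $B$ are the critical vertices of full evolutions terminating at $B$. $B$ is normal if any two critical ancestors of $B$ of equal height are isotypic. An evolution $\alpha=(A_0\leftarrow\cdots\leftarrow A_m)$ embeds in $\beta=(B_0\leftarrow\cdots\leftarrow B_n)$ if $m\le n$ and there are $0\le r_0<\cdots<r_m\le n$ with $A_k\sim B_{r_k}$. A universal evolution for $X$ is a full evolution for $X$ embedding in every full evolution for $X$; $X$ is phylogenetic if one exists. *)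

theory Defs
  imports Main "HOL-Library.Extended_Nat"
begin

text \<open>A quiver: vertices are the elements of type 'v; for each ordered pair (A,B)
  the set Q A B :: 'e set is the set of edges A -> B.
  An evolution A_0 <- A_1 <- ... <- A_m is a pair (as, es) with as = [A_0,...,A_m]
  and es = [e_1,...,e_m], where e_k is an edge A_k -> A_(k-1).\<close>

type_synonym ('v,'e) quiver = "'v \<Rightarrow> 'v \<Rightarrow> 'e set"
type_synonym ('v,'e) evol = "'v list \<times> 'e list"

definition is_evol :: "('v,'e) quiver \<Rightarrow> ('v,'e) evol \<Rightarrow> bool" where
  "is_evol Q ev \<longleftrightarrow> fst ev \<noteq> [] \<and> length (snd ev) + 1 = length (fst ev) \<and>
     (\<forall>k<length (snd ev). snd ev ! k \<in> Q (fst ev ! (k+1)) (fst ev ! k))"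

definition evlen :: "('v,'e) evol \<Rightarrow> nat" where
  "evlen ev = length (snd ev)"

definition init_v :: "('v,'e) evol \<Rightarrow> 'v" where
  "init_v ev = hd (fst ev)"

definition term_v :: "('v,'e) evol \<Rightarrow> 'v" where
  "term_v ev = last (fst ev)"

definition ancestor :: "('v,'e) quiver \<Rightarrow> 'v \<Rightarrow> 'v \<Rightarrow> bool" where
  "ancestor Q A B \<longleftrightarrow> (\<exists>ev. is_evol Q ev \<and> init_v ev = A \<and> term_v ev = B)"

definition isotypic :: "('v,'e) quiver \<Rightarrow> 'v \<Rightarrow> 'v \<Rightarrow> bool" where
  "isotypic Q A B \<longleftrightarrow> ancestor Q A B \<and> ancestor Q B A"

definition primitive :: "('v,'e) quiver \<Rightarrow> 'v \<Rightarrow> bool" where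
  "primitive Q A \<longleftrightarrow> (\<forall>B. ancestor Q B A \<longrightarrow> isotypic Q B A)"

definition full_evol :: "('v,'e) quiver \<Rightarrow> 'v \<Rightarrow> ('v,'e) evol \<Rightarrow> bool" where
  "full_evol Q X ev \<longleftrightarrow> is_evol Q ev \<and> primitive Q (init_v ev) \<and> term_v ev = X"

text \<open>Height: smallest length of a full evolution; \<infinity> (= Inf {}) if there is none.\<close>
definition height :: "('v,'e) quiver \<Rightarrow> 'v \<Rightarrow> enat" where
  "height Q X = (INF ev\<in>{ev. full_evol Q X ev}. enat (evlen ev))"

definition critical :: "('v,'e) quiver \<Rightarrow> ('v,'e) evol \<Rightarrow> nat \<Rightarrow> bool" where
  "critical Q ev k \<longleftrightarrow> k < evlen ev \<and> height Q (fst ev ! k) < \<infinity> \<and>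
     height Q (fst ev ! (k+1)) = height Q (fst ev ! k) + 1"

definition critical_ancestor :: "('v,'e) quiver \<Rightarrow> 'v \<Rightarrow> 'v \<Rightarrow> bool" where
  "critical_ancestor Q B A \<longleftrightarrow>
     (\<exists>ev k. full_evol Q B ev \<and> critical Q ev k \<and> fst ev ! k = A)"

definition normal :: "('v,'e) quiver \<Rightarrow> 'v \<Rightarrow> bool" where
  "normal Q B \<longleftrightarrow> (\<forall>A A'. critical_ancestor Q B A \<and> critical_ancestor Q B A'
      \<and> height Q A = height Q A' \<longrightarrow> isotypic Q A A')"

definition embeds :: "('v,'e) quiver \<Rightarrow> ('v,'e) evol \<Rightarrow> ('v,'e) evol \<Rightarrow> bool" where
  "embeds Q \<alpha> \<beta> \<longleftrightarrow> evlen \<alpha> \<le> evlen \<beta> \<and>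
     (\<exists>r::nat \<Rightarrow> nat. strict_mono_on {0..evlen \<alpha>} r \<and> r (evlen \<alpha>) \<le> evlen \<beta> \<and>
        (\<forall>k\<le>evlen \<alpha>. isotypic Q (fst \<alpha> ! k) (fst \<beta> ! r k)))"

definition universal_evol :: "('v,'e) quiver \<Rightarrow> 'v \<Rightarrow> ('v,'e) evol \<Rightarrow> bool" where
  "universal_evol Q X ev \<longleftrightarrow> full_evol Q X ev \<and> (\<forall>\<beta>. full_evol Q X \<beta> \<longrightarrow> embeds Q ev \<beta>)"

definition phylogenetic :: "('v,'e) quiver \<Rightarrow> 'v \<Rightarrow> bool" where
  "phylogenetic Q X \<longleftrightarrow> (\<exists>ev. universal_evol Q X ev)"

end

theory Submission
  imports Defs
begin

text \<open>Let \<alpha> be a shortest full evolution for X, of length n = h(X). Its k-th vertex has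
  height exactly k, so each of \<alpha>'s first n vertices is a critical ancestor of X.
  Along any other full evolution \<beta> for X the height starts at 0, ends at n and rises by at
  most one per step; hence for each k < n the last vertex of \<beta> of height \<le> k has height k
  and its successor height k + 1, i.e. it is a critical ancestor of height k. Normality makes
  it isotypic to \<alpha>'s k-th vertex, and these last positions increase with k, which embeds \<alpha>
  in \<beta>.\<close>

lemma is_evol_singleton: "is_evol Q ([A], [])"
  by (simp add: is_evol_def)

lemma isotypic_refl: "isotypic Q A A"
  unfolding isotypic_def ancestor_def
  using is_evol_singleton by (fastforce simp: init_v_def term_v_def)

lemma init_v_eq_nth_0: "is_evol Q ev \<Longrightarrow> init_v ev = fst ev ! 0"
  unfolding is_evol_def init_v_def by (simp add: hd_conv_nth)

lemma term_v_eq_nth_evlen: "is_evol Q ev \<Longrightarrow> term_v ev = fst ev ! evlen ev"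
  unfolding is_evol_def term_v_def evlen_def by (metis add_diff_cancel_right' last_conv_nth)

lemma is_evol_append:
  assumes "is_evol Q e1" "is_evol Q e2" "term_v e1 = init_v e2"
  shows "is_evol Q (fst e1 @ tl (fst e2), snd e1 @ snd e2)"
    and "init_v (fst e1 @ tl (fst e2), snd e1 @ snd e2) = init_v e1"
    and "term_v (fst e1 @ tl (fst e2), snd e1 @ snd e2) = term_v e2"
proof -
  obtain as1 es1 as2 es2 where e: "e1 = (as1, es1)" "e2 = (as2, es2)" by fastforce
  have n: "as1 \<noteq> []" "length es1 + 1 = length as1" "as2 \<noteq> []" "length es2 + 1 = length as2"
    and c1: "\<And>k. k < length es1 \<Longrightarrow> es1 ! k \<in> Q (as1 ! (k+1)) (as1 ! k)"
    and c2: "\<And>k. k < length es2 \<Longrightarrow> es2 ! k \<in> Q (as2 ! (k+1)) (as2 ! k)"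
    using assms(1,2) unfolding e is_evol_def by auto
  have joint: "last as1 = hd as2" using assms(3) unfolding e term_v_def init_v_def by simp
  have glue: "as1 @ tl as2 = butlast as1 @ as2"
    using n joint by (metis append_butlast_last_id append_eq_append_conv2 append_Cons append_Nil list.collapse)
  have lb: "length (butlast as1) = length es1" using n by simp
  have at_joint: "as2 ! 0 = as1 ! length es1"
    using n joint by (metis add_diff_cancel_right' hd_conv_nth last_conv_nth)
  have on_e1: "(butlast as1 @ as2) ! j = as1 ! j" if "j \<le> length es1" for j
    using that lb at_joint by (cases "j = length es1") (auto simp: nth_append nth_butlast)
  have "(es1 @ es2) ! k \<in> Q ((butlast as1 @ as2) ! (k+1)) ((butlast as1 @ as2) ! k)"
    if k: "k < length es1 + length es2" for k
  proof (cases "k < length es1")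
    case True
    with c1[OF True] on_e1[of k] on_e1[of "k+1"] show ?thesis by (simp add: nth_append)
  next
    case False
    then obtain i where "k = length es1 + i" "i < length es2" using k le_Suc_ex by force
    with c2 lb show ?thesis by (simp add: nth_append)
  qed
  then show "is_evol Q (fst e1 @ tl (fst e2), snd e1 @ snd e2)"
    unfolding is_evol_def e using glue n by simp
  show "init_v (fst e1 @ tl (fst e2), snd e1 @ snd e2) = init_v e1"
    unfolding init_v_def e using n by simp
  show "term_v (fst e1 @ tl (fst e2), snd e1 @ snd e2) = term_v e2"
    unfolding term_v_def e using glue n by simp
qed

lemma is_evol_take:
  assumes "is_evol Q ev" "j \<le> evlen ev"
  shows "is_evol Q (take (Suc j) (fst ev), take j (snd ev))"
    and "init_v (take (Suc j) (fst ev), take j (snd ev)) = init_v ev"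
    and "term_v (take (Suc j) (fst ev), take j (snd ev)) = fst ev ! j"
  using assms unfolding is_evol_def init_v_def term_v_def evlen_def
  by (auto simp: hd_take last_conv_nth)

lemma is_evol_drop:
  assumes "is_evol Q ev" "j \<le> evlen ev"
  shows "is_evol Q (drop j (fst ev), drop j (snd ev))"
    and "init_v (drop j (fst ev), drop j (snd ev)) = fst ev ! j"
    and "term_v (drop j (fst ev), drop j (snd ev)) = term_v ev"
  using assms unfolding is_evol_def init_v_def term_v_def evlen_def
  by (auto simp: hd_drop_conv_nth add.commute add.left_commute)

lemma is_evol_edge:
  assumes "is_evol Q ev" "j < evlen ev"
  shows "is_evol Q ([fst ev ! j, fst ev ! Suc j], [snd ev ! j])"
  using assms unfolding is_evol_def evlen_def by auto

lemma height_le_evlen: "full_evol Q X ev \<Longrightarrow> height Q X \<le> enat (evlen ev)"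
  unfolding height_def by (rule INF_lower) simp

lemma ex_shortest_full_evol:
  assumes "height Q X < \<infinity>"
  obtains ev where "full_evol Q X ev" "height Q X = enat (evlen ev)"
proof -
  have "{ev. full_evol Q X ev} \<noteq> {}"
    using assms unfolding height_def by (metis INF_empty less_irrefl top_enat_def)
  then obtain ev0 where "full_evol Q X ev0" by blast
  then obtain ev where ev: "full_evol Q X ev" "\<And>ev'. full_evol Q X ev' \<Longrightarrow> evlen ev \<le> evlen ev'"
    using ex_has_least_nat[of "full_evol Q X" ev0 evlen] by auto
  have "enat (evlen ev) \<le> height Q X"
    unfolding height_def by (rule INF_greatest) (simp add: ev(2))
  with height_le_evlen[OF ev(1)] show thesis
    using ev(1) that by (simp add: antisym)
qed

lemma height_le_height_plus_evlen:
  assumes "is_evol Q ev"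
  shows "height Q (term_v ev) \<le> height Q (init_v ev) + enat (evlen ev)"
proof (cases "height Q (init_v ev) < \<infinity>")
  case True
  then obtain e1 where e1: "full_evol Q (init_v ev) e1" "height Q (init_v ev) = enat (evlen e1)"
    by (rule ex_shortest_full_evol)
  then have "full_evol Q (term_v ev) (fst e1 @ tl (fst ev), snd e1 @ snd ev)"
    using is_evol_append[OF _ assms] unfolding full_evol_def by auto
  from height_le_evlen[OF this] e1(2) show ?thesis by (simp add: evlen_def)
qed simp

lemma height_primitive: "primitive Q A \<Longrightarrow> height Q A = 0"
  using height_le_evlen[of Q A "([A], [])"]
  by (simp add: full_evol_def is_evol_singleton init_v_def term_v_def evlen_def
      zero_enat_def[symmetric])

lemma height_nth_le:
  assumes "full_evol Q X ev" "j \<le> evlen ev"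
  shows "height Q (fst ev ! j) \<le> enat j"
proof -
  have "full_evol Q (fst ev ! j) (take (Suc j) (fst ev), take j (snd ev))"
    using assms is_evol_take[of Q ev j] unfolding full_evol_def by auto
  from height_le_evlen[OF this] show ?thesis
    using assms unfolding full_evol_def is_evol_def evlen_def by simp
qed

lemma height_Suc_le:
  assumes "is_evol Q ev" "j < evlen ev"
  shows "height Q (fst ev ! Suc j) \<le> height Q (fst ev ! j) + 1"
  using height_le_height_plus_evlen[OF is_evol_edge[OF assms]]
  by (simp add: init_v_def term_v_def evlen_def one_enat_def)

lemma height_nth_shortest:
  assumes "full_evol Q X \<alpha>" "height Q X = enat (evlen \<alpha>)" "k \<le> evlen \<alpha>"
  shows "height Q (fst \<alpha> ! k) = enat k"
proof (rule antisym)
  show "height Q (fst \<alpha> ! k) \<le> enat k" by (rule height_nth_le[OF assms(1,3)])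
  have ev: "is_evol Q \<alpha>" "term_v \<alpha> = X" using assms(1) unfolding full_evol_def by auto
  have "enat (evlen \<alpha>) \<le> height Q (fst \<alpha> ! k) + enat (evlen \<alpha> - k)"
    using height_le_height_plus_evlen[OF is_evol_drop(1)[OF ev(1) assms(3)]]
      is_evol_drop(2,3)[OF ev(1) assms(3)] ev(2) assms(2) by (simp add: evlen_def)
  then show "enat k \<le> height Q (fst \<alpha> ! k)"
    using assms(3) by (cases "height Q (fst \<alpha> ! k)") auto
qed

lemma critical_ancestorI:
  assumes "full_evol Q X ev" "j < evlen ev"
    and "height Q (fst ev ! j) = enat i" "height Q (fst ev ! Suc j) = enat (Suc i)"
  shows "critical_ancestor Q X (fst ev ! j)"
  using assms unfolding critical_ancestor_def critical_def
  by (fastforce simp: eSuc_enat[symmetric] eSuc_plus_1)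

definition last_at_most :: "(nat \<Rightarrow> nat) \<Rightarrow> nat \<Rightarrow> nat \<Rightarrow> nat" where
  "last_at_most g m k = (GREATEST j. j \<le> m \<and> g j \<le> k)"

lemma last_at_most:
  fixes g :: "nat \<Rightarrow> nat"
  assumes "g 0 = 0" "g m = n" "\<forall>j<m. g (Suc j) \<le> Suc (g j)" "k < n"
  shows "last_at_most g m k < m" "g (last_at_most g m k) = k"
    and "g (Suc (last_at_most g m k)) = Suc k"
    and "\<And>j. j \<le> m \<Longrightarrow> g j \<le> k \<Longrightarrow> j \<le> last_at_most g m k"
proof -
  let ?r = "last_at_most g m k"
  have bounded: "\<And>j. j \<le> m \<and> g j \<le> k \<Longrightarrow> j \<le> m" by simp
  have r: "?r \<le> m \<and> g ?r \<le> k"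
    unfolding last_at_most_def by (rule GreatestI_nat[of _ 0 m]) (use assms(1) in auto)
  show max: "\<And>j. j \<le> m \<Longrightarrow> g j \<le> k \<Longrightarrow> j \<le> ?r"
    unfolding last_at_most_def by (rule Greatest_le_nat[OF _ bounded]) simp
  show "?r < m" using r assms(2,4) by (cases "?r = m") auto
  then have "\<not> g (Suc ?r) \<le> k" using max[of "Suc ?r"] by auto
  moreover have "g (Suc ?r) \<le> Suc (g ?r)" using assms(3) \<open>?r < m\<close> by blast
  ultimately show "g ?r = k" "g (Suc ?r) = Suc k" using r by auto
qed

lemma last_at_most_top: "g m = n \<Longrightarrow> last_at_most g m n = m"
  unfolding last_at_most_def by (rule Greatest_equality) auto

lemma strict_mono_on_last_at_most:
  fixes g :: "nat \<Rightarrow> nat"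
  assumes "g 0 = 0" "g m = n" "\<forall>j<m. g (Suc j) \<le> Suc (g j)"
  shows "strict_mono_on {0..n} (last_at_most g m)"
proof (rule strict_mono_onI)
  fix k k' assume kk: "k \<in> {0..n}" "k' \<in> {0..n}" "k < k'"
  then have k: "k < n" by simp
  note crossing = last_at_most[of g m n, OF assms]
  show "last_at_most g m k < last_at_most g m k'"
  proof (cases "k' = n")
    case True
    with crossing(1)[OF k] show ?thesis using last_at_most_top[of g m n, OF assms(2)] by simp
  next
    case False
    with kk have k': "k' < n" by simp
    have "last_at_most g m k \<le> last_at_most g m k'"
      using crossing(1,2)[OF k] kk(3) by (intro crossing(4)[OF k']) auto
    moreover have "last_at_most g m k \<noteq> last_at_most g m k'"
      using crossing(2)[OF k] crossing(2)[OF k'] kk(3) by auto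
    ultimately show ?thesis by simp
  qed
qed

lemma critical_ancestors_along_full_evol:
  assumes "full_evol Q X \<beta>" "height Q X = enat n"
  obtains r where "strict_mono_on {0..n} r" "r n = evlen \<beta>"
    and "\<And>k. k < n \<Longrightarrow> height Q (fst \<beta> ! r k) = enat k"
    and "\<And>k. k < n \<Longrightarrow> critical_ancestor Q X (fst \<beta> ! r k)"
proof -
  define m where "m = evlen \<beta>"
  have \<beta>: "is_evol Q \<beta>" "primitive Q (init_v \<beta>)" "term_v \<beta> = X"
    using assms(1) unfolding full_evol_def by auto
  define g where "g j = the_enat (height Q (fst \<beta> ! j))" for j
  have height_\<beta>: "height Q (fst \<beta> ! j) = enat (g j)" if "j \<le> m" for j
    using height_nth_le[OF assms(1) that[unfolded m_def]] unfolding g_def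
    by (cases "height Q (fst \<beta> ! j)") auto
  have g0: "g 0 = 0"
    using height_\<beta>[of 0] height_primitive[OF \<beta>(2)] init_v_eq_nth_0[OF \<beta>(1)]
    by (simp add: zero_enat_def)
  have gm: "g m = n"
    using height_\<beta>[of m] term_v_eq_nth_evlen[OF \<beta>(1)] \<beta>(3) assms(2) m_def by simp
  have g_step: "\<forall>j<m. g (Suc j) \<le> Suc (g j)"
    using height_Suc_le[OF \<beta>(1)] height_\<beta> m_def by (auto simp: one_enat_def)
  note crossing = last_at_most[of g m n, OF g0 gm g_step]
  show thesis
  proof
    show "strict_mono_on {0..n} (last_at_most g m)"
      by (rule strict_mono_on_last_at_most[OF g0 gm g_step])
    show "last_at_most g m n = evlen \<beta>" using last_at_most_top[of g m n, OF gm] m_def by simp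
    show "height Q (fst \<beta> ! last_at_most g m k) = enat k" if "k < n" for k
      using crossing(1,2)[OF that] height_\<beta> by simp
    show "critical_ancestor Q X (fst \<beta> ! last_at_most g m k)" if "k < n" for k
      using critical_ancestorI[OF assms(1)] crossing(1-3)[OF that] height_\<beta> m_def by simp
  qed
qed

lemma embeds_shortest_full_evol:
  assumes "normal Q X" "full_evol Q X \<alpha>" "height Q X = enat (evlen \<alpha>)" "full_evol Q X \<beta>"
  shows "embeds Q \<alpha> \<beta>"
proof -
  define n where "n = evlen \<alpha>"
  obtain r where r: "strict_mono_on {0..n} r" "r n = evlen \<beta>"
    and height_r: "\<And>k. k < n \<Longrightarrow> height Q (fst \<beta> ! r k) = enat k"
    and critical_r: "\<And>k. k < n \<Longrightarrow> critical_ancestor Q X (fst \<beta> ! r k)"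
    using critical_ancestors_along_full_evol[OF assms(4)] assms(3) n_def by metis
  have height_\<alpha>: "height Q (fst \<alpha> ! j) = enat j" if "j \<le> n" for j
    using height_nth_shortest[OF assms(2,3)] that n_def by simp
  have "isotypic Q (fst \<alpha> ! k) (fst \<beta> ! r k)" if "k \<le> n" for k
  proof (cases "k = n")
    case True
    have "fst \<alpha> ! n = X" "fst \<beta> ! evlen \<beta> = X"
      using assms(2,4) term_v_eq_nth_evlen unfolding full_evol_def n_def by metis+
    with True r(2) show ?thesis by (simp add: isotypic_refl)
  next
    case False
    with that have k: "k < n" by simp
    have "critical_ancestor Q X (fst \<alpha> ! k)"
      using critical_ancestorI[OF assms(2)] k height_\<alpha>[of k] height_\<alpha>[of "Suc k"] n_def by simp
    with critical_r[OF k] height_r[OF k] height_\<alpha>[of k] k assms(1) show ?thesis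
      unfolding normal_def by auto
  qed
  moreover have "n \<le> evlen \<beta>" using height_le_evlen[OF assms(4)] assms(3) n_def by simp
  ultimately show ?thesis unfolding embeds_def using r n_def by auto
qed

theorem theorem5p1:
  fixes Q :: "('v,'e) quiver" and X :: 'v
  assumes "normal Q X" and "height Q X < \<infinity>"
  shows "phylogenetic Q X"
proof -
  obtain \<alpha> where "full_evol Q X \<alpha>" "height Q X = enat (evlen \<alpha>)"
    using ex_shortest_full_evol[OF assms(2)] .
  with embeds_shortest_full_evol[OF assms(1)] have "universal_evol Q X \<alpha>"
    unfolding universal_evol_def by blast
  then show ?thesis unfolding phylogenetic_def by blast
qed

end
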